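(* Let $R=\bigoplus_{s\in S}R_s$ be an $S$-graded ring inducing $S$ with $S$ cancellative. If $R$ is graded von Neumann regular, then $R$ is nearly epsilon-strongly graded.
   Context: Rings are associative, not necessarily unital. $S$-graded ring inducing $S$: $S$ a partial groupoid, $R=\bigoplus_{s\in S}R_s$, $R_sR_t\subseteq R_{st}$ when $st$ is defined, and $R_sR_t\neq0$ implies $st$ defined. Convention: $0\in S$, $R_0=0$, $S\setminus\{0\}=\{s:R_s\ne0\}$, undefined products set to $0$, $0$ absorbing. $H_R=\bigcup_sR_s$. $S$ is cancellative if $0\ne su=tu$ or $0\ne us=ut$ implies $s=t$. $I(S)$ is the set of idempotents of $S$. $S$ satisfies (LRI) if for every $s\in S$ there exist $s^{-1}\in S$ and $e,f\in I(S)$ with $es=sf=s$, $fs^{-1}=s^{-1}e=s^{-1}$, $ss^{-1}=e$, $s^{-1}s=f$ (these are unique when $S$ is cancellative). For $s,t$, $R_sR_t$ denotes the additive subgroup generated by products $ab$, $a\in R_s$, $b\in R_t$. $R$ (with $S$ cancellative) is nearly epsilon-strongly graded if $S$ satisfies (LRI) and for every $s\in S$ and $x\in R_s$ there exist $\epsilon(x)\in R_sR_{s^{-1}}$ and $\epsilon'(x)\in R_{s^{-1}}R_s$ with $\epsilon(x)x=x=x\epsilon'(x)$. $R$ is graded von Neumann regular if $x\in xRx$ for all $x\in H_R$. *)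

theory Defs
  imports Main
begin

text \<open>A partial groupoid S with an absorbing zero z is modelled as a type 's with a total
binary operation m, undefined products being sent to z. The ring R is the whole type 'a
(an associative, not necessarily unital ring, class ring).\<close>

definition graded_ring_inducing ::
  "('s \<Rightarrow> 's \<Rightarrow> 's) \<Rightarrow> 's \<Rightarrow> ('s \<Rightarrow> 'a::ring set) \<Rightarrow> bool" where
  "graded_ring_inducing m z G \<longleftrightarrow>
     (\<forall>t. m z t = z \<and> m t z = z) \<and>
     G z = {0} \<and>
     (\<forall>s. s \<noteq> z \<longrightarrow> G s \<noteq> {0}) \<and>
     (\<forall>s. 0 \<in> G s \<and> (\<forall>x\<in>G s. \<forall>y\<in>G s. x + y \<in> G s \<and> - x \<in> G s)) \<and>
     (\<forall>x. \<exists>c. finite {s. c s \<noteq> 0} \<and> (\<forall>s. c s \<in> G s) \<and>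
            x = (\<Sum>s\<in>{s. c s \<noteq> 0}. c s)) \<and>
     (\<forall>c. finite {s. c s \<noteq> 0} \<and> (\<forall>s. c s \<in> G s) \<and>
            (\<Sum>s\<in>{s. c s \<noteq> 0}. c s) = 0 \<longrightarrow> (\<forall>s. c s = 0)) \<and>
     (\<forall>s t. \<forall>a\<in>G s. \<forall>b\<in>G t. a * b \<in> G (m s t))"

definition cancellative :: "('s \<Rightarrow> 's \<Rightarrow> 's) \<Rightarrow> 's \<Rightarrow> bool" where
  "cancellative m z \<longleftrightarrow>
     (\<forall>s t u. (m s u \<noteq> z \<and> m s u = m t u) \<longrightarrow> s = t) \<and>
     (\<forall>s t u. (m u s \<noteq> z \<and> m u s = m u t) \<longrightarrow> s = t)"

definition idempotents :: "('s \<Rightarrow> 's \<Rightarrow> 's) \<Rightarrow> 's set" where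
  "idempotents m = {e. m e e = e}"

definition LRI_inverse :: "('s \<Rightarrow> 's \<Rightarrow> 's) \<Rightarrow> 's \<Rightarrow> 's \<Rightarrow> bool" where
  "LRI_inverse m s s' \<longleftrightarrow>
     (\<exists>e\<in>idempotents m. \<exists>f\<in>idempotents m.
        m e s = s \<and> m s f = s \<and> m f s' = s' \<and> m s' e = s' \<and> m s s' = e \<and> m s' s = f)"

definition LRI :: "('s \<Rightarrow> 's \<Rightarrow> 's) \<Rightarrow> bool" where
  "LRI m \<longleftrightarrow> (\<forall>s. \<exists>s'. LRI_inverse m s s')"

inductive_set prod_subgroup :: "'a::ring set \<Rightarrow> 'a set \<Rightarrow> 'a set" for A B where
  zero: "0 \<in> prod_subgroup A B"
| gen: "a \<in> A \<Longrightarrow> b \<in> B \<Longrightarrow> a * b \<in> prod_subgroup A B"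
| add: "x \<in> prod_subgroup A B \<Longrightarrow> y \<in> prod_subgroup A B \<Longrightarrow> x + y \<in> prod_subgroup A B"
| neg: "x \<in> prod_subgroup A B \<Longrightarrow> - x \<in> prod_subgroup A B"

text \<open>Since S is cancellative, the inverse s^{-1} in (LRI) is unique; we quantify over it.\<close>
definition nearly_epsilon_strongly_graded ::
  "('s \<Rightarrow> 's \<Rightarrow> 's) \<Rightarrow> ('s \<Rightarrow> 'a::ring set) \<Rightarrow> bool" where
  "nearly_epsilon_strongly_graded m G \<longleftrightarrow>
     LRI m \<and>
     (\<forall>s s'. LRI_inverse m s s' \<longrightarrow>
        (\<forall>x\<in>G s. \<exists>\<epsilon>\<in>prod_subgroup (G s) (G s'). \<exists>\<epsilon>'\<in>prod_subgroup (G s') (G s).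
            \<epsilon> * x = x \<and> x * \<epsilon>' = x))"

definition homogeneous :: "('s \<Rightarrow> 'a set) \<Rightarrow> 'a set" where
  "homogeneous G = (\<Union>s. G s)"

definition graded_von_neumann_regular :: "('s \<Rightarrow> 'a::ring set) \<Rightarrow> bool" where
  "graded_von_neumann_regular G \<longleftrightarrow> (\<forall>x\<in>homogeneous G. \<exists>r. x = x * r * x)"

end

theory Submission
  imports Defs
begin

text \<open>Regularity writes a homogeneous x of degree s as x = x r x. Splitting r into homogeneous
components r_t, the element x r_t x has degree (st)s, so comparing degree-s components, x is the
sum of the x r_t x with (st)s = s. In a cancellative S there is only one such t, hence x = x b x
with b homogeneous of degree t. Then y = b x b satisfies x y x = x and y x y = y, and reading off
the degrees of x y, y x and of their products with x and y yields an (LRI) inverse of s, which by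
cancellativity is the degree of b. The local units are \<epsilon>(x) = x b and \<epsilon>'(x) = b x.\<close>

lemma cancellative_sandwich_unique:
  assumes "cancellative m z" and "m z s = z" and "s \<noteq> z"
    and "m (m s t) s = s" and "m (m s t') s = s"
  shows "t = t'"
proof -
  have "m s t = m s t'"
    using assms unfolding cancellative_def by metis
  moreover have "m s t \<noteq> z"
    using assms(2-4) by force
  ultimately show ?thesis
    using assms(1) unfolding cancellative_def by blast
qed

locale graded_ring =
  fixes m :: "'s \<Rightarrow> 's \<Rightarrow> 's" and z :: 's and G :: "'s \<Rightarrow> 'a::ring set"
  assumes zero_absorb_left: "m z t = z"
    and component_zero: "G z = {0}"
    and component_nonzero: "s \<noteq> z \<Longrightarrow> G s \<noteq> {0}"
    and zero_mem: "0 \<in> G s"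
    and add_mem: "x \<in> G s \<Longrightarrow> y \<in> G s \<Longrightarrow> x + y \<in> G s"
    and uminus_mem: "x \<in> G s \<Longrightarrow> - x \<in> G s"
    and decompose: "\<exists>c. finite {s. c s \<noteq> 0} \<and> (\<forall>s. c s \<in> G s) \<and> x = (\<Sum>s\<in>{s. c s \<noteq> 0}. c s)"
    and independent: "finite {s. c s \<noteq> 0} \<Longrightarrow> \<forall>s. c s \<in> G s \<Longrightarrow>
                        (\<Sum>s\<in>{s. c s \<noteq> 0}. c s) = 0 \<Longrightarrow> c s = 0"
    and mult_mem: "a \<in> G s \<Longrightarrow> b \<in> G t \<Longrightarrow> a * b \<in> G (m s t)"

lemma graded_ring_inducing_imp_graded_ring:
  "graded_ring_inducing m z G \<Longrightarrow> graded_ring m z G"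
  unfolding graded_ring_inducing_def graded_ring_def by (elim conjE) (intro conjI allI impI; blast)

context graded_ring
begin

lemma diff_mem: "x \<in> G s \<Longrightarrow> y \<in> G s \<Longrightarrow> x - y \<in> G s"
  using add_mem uminus_mem by (simp only: diff_conv_add_uminus)

lemma sum_mem: "finite F \<Longrightarrow> (\<And>t. t \<in> F \<Longrightarrow> d t \<in> G s) \<Longrightarrow> sum d F \<in> G s"
  by (induction F rule: finite_induct) (simp_all add: zero_mem add_mem)

lemma homogeneous_eq_component_sum:
  assumes "finite F" and d: "\<And>t. t \<in> F \<Longrightarrow> d t \<in> G (\<phi> t)"
    and "y \<in> G s" and y: "y = sum d F"
  shows "y = (\<Sum>t\<in>{t\<in>F. \<phi> t = s}. d t)"
proof -
  define S where "S = insert s (\<phi> ` F)"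
  \<comment> \<open>c is a decomposition of sum d F - y = 0 into homogeneous components\<close>
  define c where "c p = (\<Sum>t\<in>{t\<in>F. \<phi> t = p}. d t) - (if p = s then y else 0)" for p
  have "finite S"
    using \<open>finite F\<close> by (simp add: S_def)
  have support: "{p. c p \<noteq> 0} \<subseteq> S"
  proof (rule subsetI, rule ccontr)
    fix p
    assume "p \<notin> S"
    then have "p \<noteq> s" and "{t\<in>F. \<phi> t = p} = {}"
      by (auto simp: S_def)
    then show "p \<in> {p. c p \<noteq> 0} \<Longrightarrow> False"
      by (simp add: c_def)
  qed
  have "c p \<in> G p" for p
    using \<open>finite F\<close> d \<open>y \<in> G s\<close> by (auto simp: c_def intro!: diff_mem sum_mem zero_mem)
  moreover have "(\<Sum>p\<in>{p. c p \<noteq> 0}. c p) = 0"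
  proof -
    have "(\<Sum>p\<in>{p. c p \<noteq> 0}. c p) = (\<Sum>p\<in>S. c p)"
      using \<open>finite S\<close> support by (intro sum.mono_neutral_left) auto
    also have "\<dots> = (\<Sum>p\<in>S. \<Sum>t\<in>{t\<in>F. \<phi> t = p}. d t) - y"
      using \<open>finite S\<close> by (simp add: c_def sum_subtractf S_def)
    also have "\<dots> = 0"
      using sum.group[OF \<open>finite F\<close> \<open>finite S\<close>, of \<phi> d] y by (auto simp: S_def)
    finally show ?thesis .
  qed
  ultimately have "c s = 0"
    using independent finite_subset[OF support \<open>finite S\<close>] by blast
  then show ?thesis
    by (simp add: c_def)
qed

lemma degree_unique:
  assumes "a \<in> G p" and "a \<in> G q" and "a \<noteq> 0"
  shows "p = q"
proof -
  have "a = (\<Sum>t\<in>{t\<in>{q}. t = p}. a)"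
    using assms(1,2) by (intro homogeneous_eq_component_sum) auto
  moreover have "{t\<in>{q}. t = p} = (if q = p then {q} else {})"
    by auto
  ultimately show ?thesis
    using assms(3) by (auto split: if_splits)
qed

lemma degree_ne_zero: "x \<in> G s \<Longrightarrow> x \<noteq> 0 \<Longrightarrow> s \<noteq> z"
  using component_zero by auto

lemma LRI_inverse_if_mutually_inverse:
  assumes x: "x \<in> G s" and y: "y \<in> G s'" and "x \<noteq> 0"
    and xyx: "x * y * x = x" and yxy: "y * x * y = y"
  shows "LRI_inverse m s s'"
proof -
  define e where "e = m s s'"
  define f where "f = m s' s"
  have xy: "x * y \<in> G e" and yx: "y * x \<in> G f"
    using mult_mem x y by (simp_all add: e_def f_def)
  have "y \<noteq> 0" and "x * y \<noteq> 0" and "y * x \<noteq> 0"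
    using xyx \<open>x \<noteq> 0\<close> by (auto, metis mult.assoc mult_zero_right)
  have xyx': "x * (y * (x * w)) = x * w" and yxy': "y * (x * (y * w)) = y * w" for w
    using xyx yxy by (metis mult.assoc)+
  have "x * y \<in> G (m e e)" and "y * x \<in> G (m f f)" and "x \<in> G (m e s)" and "x \<in> G (m s f)"
    and "y \<in> G (m f s')" and "y \<in> G (m s' e)"
    using mult_mem[OF xy xy] mult_mem[OF yx yx] mult_mem[OF xy x] mult_mem[OF x yx]
      mult_mem[OF yx y] mult_mem[OF y xy] xyx yxy
    by (simp_all add: mult.assoc xyx' yxy')
  then have "m e e = e" and "m f f = f" and "m e s = s" and "m s f = s"
    and "m f s' = s'" and "m s' e = s'"
    using degree_unique x y xy yx \<open>x \<noteq> 0\<close> \<open>y \<noteq> 0\<close> \<open>x * y \<noteq> 0\<close> \<open>y * x \<noteq> 0\<close>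
    by blast+
  then show ?thesis
    unfolding LRI_inverse_def idempotents_def e_def f_def by auto
qed

context
  assumes regular: "graded_von_neumann_regular G" and cancel: "cancellative m z"
begin

lemma homogeneous_inner_inverse:
  assumes x: "x \<in> G s" and "x \<noteq> 0"
  obtains t b where "b \<in> G t" and "m (m s t) s = s" and "x * b * x = x"
proof -
  obtain r where "x = x * r * x"
    using regular x unfolding graded_von_neumann_regular_def homogeneous_def by blast
  obtain c where fin: "finite {t. c t \<noteq> 0}" and c: "\<And>t. c t \<in> G t"
    and r: "r = (\<Sum>t\<in>{t. c t \<noteq> 0}. c t)"
    using decompose by blast
  note \<open>x = x * r * x\<close>
  also have "x * r * x = (\<Sum>t\<in>{t. c t \<noteq> 0}. x * c t * x)"
    unfolding r by (simp add: sum_distrib_left sum_distrib_right)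
  finally have x_sum: "x = (\<Sum>t\<in>{t. c t \<noteq> 0}. x * c t * x)" .
  have "x * c t * x \<in> G (m (m s t) s)" for t
    by (intro mult_mem x c)
  then have x_eq: "x = (\<Sum>t\<in>{t\<in>{t. c t \<noteq> 0}. m (m s t) s = s}. x * c t * x)"
    (is "x = sum _ ?P")
    using homogeneous_eq_component_sum[where \<phi> = "\<lambda>t. m (m s t) s", OF fin _ x x_sum] by blast
  have "?P \<noteq> {}"
  proof
    assume "?P = {}"
    note x_eq
    also have "(\<Sum>t\<in>?P. x * c t * x) = 0"
      unfolding \<open>?P = {}\<close> by (rule sum.empty)
    finally have "x = 0" .
    with \<open>x \<noteq> 0\<close> show False ..
  qed
  then obtain t where t: "m (m s t) s = s" and "c t \<noteq> 0"
    by blast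
  have "t' = t" if "m (m s t') s = s" for t'
    using cancellative_sandwich_unique[OF cancel zero_absorb_left degree_ne_zero[OF x \<open>x \<noteq> 0\<close>]
        that t] .
  with t \<open>c t \<noteq> 0\<close> have "?P = {t}"
    by blast
  note x_eq
  also have "(\<Sum>t\<in>?P. x * c t * x) = x * c t * x"
    using \<open>?P = {t}\<close> by simp
  finally have "x = x * c t * x" .
  from c t this[symmetric] show ?thesis
    by (rule that)
qed

lemma LRI_if_regular: "LRI m"
  unfolding LRI_def
proof
  fix s
  show "\<exists>s'. LRI_inverse m s s'"
  proof (cases "s = z")
    case True
    then have "LRI_inverse m s z"
      unfolding LRI_inverse_def idempotents_def by (simp add: zero_absorb_left)
    then show ?thesis ..
  next
    case False
    then obtain x where x: "x \<in> G s" and "x \<noteq> 0"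
      using component_nonzero zero_mem by blast
    then obtain t b where b: "b \<in> G t" and xbx: "x * b * x = x"
      using homogeneous_inner_inverse by blast
    then have "x * (b * (x * w)) = x * w" for w
      by (metis mult.assoc)
    with xbx have xyx: "x * (b * x * b) * x = x"
      and yxy: "b * x * b * x * (b * x * b) = b * x * b"
      by (simp_all add: mult.assoc)
    have "b * x * b \<in> G (m (m t s) t)"
      by (intro mult_mem b x)
    then have "LRI_inverse m s (m (m t s) t)"
      by (rule LRI_inverse_if_mutually_inverse[OF x _ \<open>x \<noteq> 0\<close> xyx yxy])
    then show ?thesis ..
  qed
qed

lemma local_units_exist:
  assumes "LRI_inverse m s s'" and x: "x \<in> G s"
  shows "\<exists>\<epsilon>\<in>prod_subgroup (G s) (G s'). \<exists>\<epsilon>'\<in>prod_subgroup (G s') (G s). \<epsilon> * x = x \<and> x * \<epsilon>' = x"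
proof (cases "x = 0")
  case True
  have "0 \<in> prod_subgroup (G s) (G s')" and "0 \<in> prod_subgroup (G s') (G s)"
    by (fact prod_subgroup.zero)+
  with True show ?thesis
    by auto
next
  case False
  then obtain t b where b: "b \<in> G t" and t: "m (m s t) s = s" and xbx: "x * b * x = x"
    using homogeneous_inner_inverse x by blast
  have "m (m s s') s = s"
    using assms(1) unfolding LRI_inverse_def by auto
  then have "t = s'"
    by (rule cancellative_sandwich_unique[OF cancel zero_absorb_left degree_ne_zero[OF x False] t])
  with b x have "x * b \<in> prod_subgroup (G s) (G s')" and "b * x \<in> prod_subgroup (G s') (G s)"
    by (simp_all add: prod_subgroup.gen)
  moreover have "x * b * x = x" and "x * (b * x) = x"
    using xbx by (simp_all add: mult.assoc)
  ultimately show ?thesis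
    by blast
qed

end

end

theorem proposition4p7:
  fixes m :: "'s \<Rightarrow> 's \<Rightarrow> 's" and z :: 's and G :: "'s \<Rightarrow> 'a::ring set"
  assumes "graded_ring_inducing m z G"
    and "cancellative m z"
    and "graded_von_neumann_regular G"
  shows "nearly_epsilon_strongly_graded m G"
proof -
  interpret graded_ring m z G
    using assms(1) by (rule graded_ring_inducing_imp_graded_ring)
  show ?thesis
    unfolding nearly_epsilon_strongly_graded_def
    using LRI_if_regular[OF assms(3,2)] local_units_exist[OF assms(3,2)] by blast
qed

end
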